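(* Let $\Xi$ be a set in a normed space and let $\xi\mapsto\tilde A(\xi)\in\mathbb{R}^{n\times n}$ and $\xi\mapsto\tilde B(\xi)\in\mathbb{R}^{n\times m}$ be Lipschitz continuous with respect to the spectral norm, with Lipschitz constants $L_A$ and $L_B$ respectively. Fix $\alpha>0$, $r>0$, $\theta\in\mathbb{R}$ and $\mu>0$. For $P\in\mathbb{S}^n$, $Y\in\mathbb{R}^{m\times n}$, $\gamma\in\mathbb{R}$ set $X(\xi)=\tilde A(\xi)P-\tilde B(\xi)Y$ and define the matrix-valued constraint maps $$f_1(P,Y,\gamma,\xi)=X(\xi)+X(\xi)^T+2\alpha P-\gamma I,$$ $$f_2(P,Y,\gamma,\xi)=\begin{bmatrix}-rP & X(\xi)\\ X(\xi)^T & -rP\end{bmatrix}-\gamma I,$$ $$f_3(P,Y,\gamma,\xi)=\begin{bmatrix}\sin\theta\,(X(\xi)+X(\xi)^T) & \cos\theta\,(X(\xi)-X(\xi)^T)\\ \cos\theta\,(X(\xi)^T-X(\xi)) & \sin\theta\,(X(\xi)+X(\xi)^T)\end{bmatrix}-\gamma I.$$ Then each $f_k$, $k=1,2,3$, is Lipschitz continuous in $\xi$ (with respect to the spectral norm), uniformly over all $\gamma\in\mathbb{R}$ and all $P,Y$ satisfying $0\preceq P\preceq\mu I$ and $\|Y\|\le\mu$, with Lipschitz constant $$L=2\mu(L_A+L_B)\max\big(1,\ |\sin\theta|+|\cos\theta|\big),$$ i.e. $\|f_k(P,Y,\gamma,\xi_1)-f_k(P,Y,\gamma,\xi_2)\|\le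 L\|\xi_1-\xi_2\|$ for all $\xi_1,\xi_2\in\Xi$.
   Context: $\|\cdot\|$ denotes the spectral norm of a matrix; $\mathbb{S}^n$ is the set of real symmetric $n\times n$ matrices and $\preceq$ is the Loewner order. The maps $f_1,f_2,f_3$ encode the LMI constraints $f_k\prec 0$ of a regional pole-placement (D-stability) problem for the uncertain system $\dot x=\tilde A(\xi)x+\tilde B(\xi)u$, with parameters $\alpha$ (minimal decay), $r$ (disk radius) and $\theta$ (conic sector). *)

theory Defs
  imports "HOL-Analysis.Analysis"
begin

definition spec_norm :: "real^'n^'m \<Rightarrow> real" where
  "spec_norm A = onorm (\<lambda>x. A *v x)"

definition loewner_le :: "real^'n^'n \<Rightarrow> real^'n^'n \<Rightarrow> bool" where
  "loewner_le A B \<longleftrightarrow> (\<forall>x. 0 \<le> x \<bullet> ((B - A) *v x))"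

definition symmetric_mat :: "real^'n^'n \<Rightarrow> bool" where
  "symmetric_mat A \<longleftrightarrow> transpose A = A"

definition spec_lipschitz_on :: "real \<Rightarrow> 'a::real_normed_vector set \<Rightarrow> ('a \<Rightarrow> real^'n^'m) \<Rightarrow> bool" where
  "spec_lipschitz_on L Xi F \<longleftrightarrow>
     (\<forall>\<xi>1\<in>Xi. \<forall>\<xi>2\<in>Xi. spec_norm (F \<xi>1 - F \<xi>2) \<le> L * norm (\<xi>1 - \<xi>2))"

definition block2 :: "real^'n^'n \<Rightarrow> real^'n^'n \<Rightarrow> real^'n^'n \<Rightarrow> real^'n^'n \<Rightarrow> real^('n+'n)^('n+'n)" where
  "block2 M11 M12 M21 M22 = (\<chi> i j. case i of
      Inl a \<Rightarrow> (case j of Inl b \<Rightarrow> M11 $ a $ b | Inr b \<Rightarrow> M12 $ a $ b)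
    | Inr a \<Rightarrow> (case j of Inl b \<Rightarrow> M21 $ a $ b | Inr b \<Rightarrow> M22 $ a $ b))"

definition Xm :: "('a \<Rightarrow> real^'n^'n) \<Rightarrow> ('a \<Rightarrow> real^'m^'n) \<Rightarrow> real^'n^'n \<Rightarrow> real^'n^'m \<Rightarrow> 'a \<Rightarrow> real^'n^'n" where
  "Xm At Bt P Y \<xi> = At \<xi> ** P - Bt \<xi> ** Y"

definition f1 :: "real \<Rightarrow> ('a \<Rightarrow> real^'n^'n) \<Rightarrow> ('a \<Rightarrow> real^'m^'n) \<Rightarrow> real^'n^'n \<Rightarrow> real^'n^'m \<Rightarrow> real \<Rightarrow> 'a \<Rightarrow> real^'n^'n" where
  "f1 \<alpha> At Bt P Y \<gamma> \<xi> = (let X = Xm At Bt P Y \<xi> in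
     X + transpose X + (2 * \<alpha>) *\<^sub>R P - \<gamma> *\<^sub>R mat 1)"

definition f2 :: "real \<Rightarrow> ('a \<Rightarrow> real^'n^'n) \<Rightarrow> ('a \<Rightarrow> real^'m^'n) \<Rightarrow> real^'n^'n \<Rightarrow> real^'n^'m \<Rightarrow> real \<Rightarrow> 'a \<Rightarrow> real^('n+'n)^('n+'n)" where
  "f2 r At Bt P Y \<gamma> \<xi> = (let X = Xm At Bt P Y \<xi> in
     block2 (- r *\<^sub>R P) X (transpose X) (- r *\<^sub>R P) - \<gamma> *\<^sub>R mat 1)"

definition f3 :: "real \<Rightarrow> ('a \<Rightarrow> real^'n^'n) \<Rightarrow> ('a \<Rightarrow> real^'m^'n) \<Rightarrow> real^'n^'n \<Rightarrow> real^'n^'m \<Rightarrow> real \<Rightarrow> 'a \<Rightarrow> real^('n+'n)^('n+'n)" where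
  "f3 \<theta> At Bt P Y \<gamma> \<xi> = (let X = Xm At Bt P Y \<xi> in
     block2 (sin \<theta> *\<^sub>R (X + transpose X)) (cos \<theta> *\<^sub>R (X - transpose X))
            (cos \<theta> *\<^sub>R (transpose X - X)) (sin \<theta> *\<^sub>R (X + transpose X)) - \<gamma> *\<^sub>R mat 1)"

end

theory Submission
  imports Defs
begin

(* Between two parameters X(\<xi>) = A(\<xi>) P - B(\<xi>) Y changes by
  D = (A(\<xi>\<^sub>1) - A(\<xi>\<^sub>2)) P - (B(\<xi>\<^sub>1) - B(\<xi>\<^sub>2)) Y, so \<parallel>D\<parallel> \<le> \<mu> (L\<^sub>A + L\<^sub>B) \<parallel>\<xi>\<^sub>1 - \<xi>\<^sub>2\<parallel>, because
  0 \<preceq> P \<preceq> \<mu> I forces \<parallel>P\<parallel> \<le> \<mu>. The terms of f\<^sub>k not involving X cancel, so the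
  differences of f\<^sub>1, f\<^sub>2, f\<^sub>3 are D + D\<^sup>T, the block matrix [0, D; D\<^sup>T, 0], and the block
  matrix with diagonal blocks sin \<theta> (D + D\<^sup>T) and off-diagonal blocks \<plusminus>cos \<theta> (D - D\<^sup>T).
  A 2x2 block matrix whose diagonal blocks have norm \<le> a and off-diagonal blocks
  norm \<le> b has norm \<le> a + b; this bounds the three differences by 2 \<parallel>D\<parallel>, \<parallel>D\<parallel> and
  2 (\<bar>sin \<theta>\<bar> + \<bar>cos \<theta>\<bar>) \<parallel>D\<parallel>. *)

lemma spec_norm_mult_vec_le: "norm (A *v x) \<le> spec_norm A * norm x"
  for A :: "real^'n^'m"
  unfolding spec_norm_def by (rule onorm) simp

lemma spec_norm_leI: "(\<And>x. norm (A *v x) \<le> b * norm x) \<Longrightarrow> spec_norm A \<le> b"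
  for A :: "real^'n^'m"
  unfolding spec_norm_def by (rule onorm_le)

lemma spec_norm_nonneg: "0 \<le> spec_norm A"
  for A :: "real^'n^'m"
  unfolding spec_norm_def by (rule onorm_pos_le) simp

lemma spec_norm_add_le: "spec_norm (A + B) \<le> spec_norm A + spec_norm B"
  for A B :: "real^'n^'m"
  unfolding spec_norm_def matrix_vector_mult_add_rdistrib by (rule onorm_triangle) simp_all

lemma spec_norm_uminus [simp]: "spec_norm (- A) = spec_norm A"
  for A :: "real^'n^'m"
proof -
  have "(\<lambda>x. (- A) *v x) = (\<lambda>x. - (A *v x))"
    using matrix_vector_mult_diff_rdistrib[of 0 A] by simp
  then show ?thesis
    unfolding spec_norm_def by (simp add: onorm_neg)
qed

lemma spec_norm_diff_le: "spec_norm (A - B) \<le> spec_norm A + spec_norm B"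
  for A B :: "real^'n^'m"
  using spec_norm_add_le[of A "- B"] by simp

lemma scaleR_matrix_vector_assoc: "(c *\<^sub>R A) *v x = c *\<^sub>R (A *v x)"
  for A :: "real^'n^'m"
  by (simp add: vec_eq_iff matrix_vector_mult_def sum_distrib_left mult.assoc)

lemma spec_norm_scaleR [simp]: "spec_norm (c *\<^sub>R A) = \<bar>c\<bar> * spec_norm A"
  for A :: "real^'n^'m"
  using onorm_scaleR[of "\<lambda>x. A *v x" c]
  by (simp add: spec_norm_def scaleR_matrix_vector_assoc[abs_def])

lemma spec_norm_zero [simp]: "spec_norm (0 :: real^'n^'m) = 0"
  using spec_norm_scaleR[of 0 "0 :: real^'n^'m"] by simp

lemma spec_norm_matrix_mult_le: "spec_norm (A ** B) \<le> spec_norm A * spec_norm B"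
  for A :: "real^'k^'m" and B :: "real^'n^'k"
proof -
  have "(\<lambda>x. (A ** B) *v x) = (\<lambda>x. A *v x) \<circ> (\<lambda>x. B *v x)"
    by (simp add: fun_eq_iff matrix_vector_mul_assoc)
  then show ?thesis
    unfolding spec_norm_def by (simp add: onorm_compose)
qed

lemma spec_norm_transpose_le: "spec_norm (transpose A) \<le> spec_norm A"
  for A :: "real^'n^'m"
proof (rule spec_norm_leI)
  fix y :: "real^'m"
  let ?z = "transpose A *v y"
  have "(norm ?z)\<^sup>2 = y \<bullet> (A *v ?z)"
    by (simp add: power2_norm_eq_inner dot_lmul_matrix)
  also have "\<dots> \<le> norm y * norm (A *v ?z)"
    by (rule norm_cauchy_schwarz)
  also have "\<dots> \<le> norm y * (spec_norm A * norm ?z)"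
    by (simp add: mult_left_mono spec_norm_mult_vec_le)
  finally have "norm ?z * norm ?z \<le> (spec_norm A * norm y) * norm ?z"
    by (simp add: power2_eq_square algebra_simps)
  then show "norm ?z \<le> spec_norm A * norm y"
    using spec_norm_nonneg[of A] by (cases "norm ?z = 0") auto
qed

lemma inner_polarization_symmetric:
  fixes P :: "real^'n^'n"
  assumes "symmetric_mat P"
  shows "(x + y) \<bullet> (P *v (x + y)) - (x - y) \<bullet> (P *v (x - y)) = 4 * (y \<bullet> (P *v x))"
proof -
  have "x \<bullet> (P *v y) = y \<bullet> (P *v x)"
    using assms unfolding symmetric_mat_def
    by (metis dot_lmul_matrix inner_commute vector_transpose_matrix)
  then show ?thesis
    by (simp add: matrix_vector_right_distrib matrix_vector_mult_diff_distrib
        inner_add_left inner_add_right inner_diff_left inner_diff_right)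
qed

lemma spec_norm_le_of_loewner:
  fixes P :: "real^'n^'n"
  assumes sym: "symmetric_mat P" and psd: "loewner_le 0 P" and bound: "loewner_le P (\<mu> *\<^sub>R mat 1)"
  shows "spec_norm P \<le> \<mu>"
proof (rule spec_norm_leI)
  fix x :: "real^'n"
  let ?q = "\<lambda>z. z \<bullet> (P *v z)"
  have q_nonneg: "0 \<le> ?q z" for z
    using psd unfolding loewner_le_def by simp
  have q_le: "?q z \<le> \<mu> * (norm z)\<^sup>2" for z
  proof -
    have "(\<mu> *\<^sub>R mat 1) *v z = \<mu> *\<^sub>R z"
      by (simp add: scaleR_matrix_vector_assoc)
    then show ?thesis
      using bound[unfolded loewner_le_def, rule_format, of z]
      by (simp add: matrix_vector_mult_diff_rdistrib inner_diff_right power2_norm_eq_inner)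
  qed
  show "norm (P *v x) \<le> \<mu> * norm x"
  proof (cases "x = 0")
    case False
    have "0 \<le> \<mu> * (norm x)\<^sup>2"
      using q_le[of x] q_nonneg[of x] by linarith
    with False have "0 \<le> \<mu>"
      by (simp add: zero_le_mult_iff)
    show ?thesis
    proof (cases "P *v x = 0")
      case Px: False
      \<comment> \<open>polarize with y the multiple of P x of the same length as x\<close>
      define y where "y = (norm x / norm (P *v x)) *\<^sub>R (P *v x)"
      have "4 * (norm x * norm (P *v x)) = 4 * (y \<bullet> (P *v x))"
        using Px by (simp add: y_def power2_norm_eq_inner[symmetric] power2_eq_square)
      also have "\<dots> \<le> \<mu> * (norm (x + y))\<^sup>2"
        using inner_polarization_symmetric[OF sym, of x y] q_le[of "x + y"] q_nonneg[of "x - y"]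
        by linarith
      also have "\<dots> \<le> \<mu> * (2 * norm x)\<^sup>2"
        using norm_triangle_ineq[of x y] Px \<open>0 \<le> \<mu>\<close>
        by (intro mult_left_mono power_mono) (auto simp: y_def)
      finally have "norm x * norm (P *v x) \<le> norm x * (\<mu> * norm x)"
        by (simp add: power2_eq_square algebra_simps)
      then show ?thesis
        using False by (simp add: mult.commute)
    qed (simp add: \<open>0 \<le> \<mu>\<close>)
  qed simp
qed

definition vec_inl :: "real^('n + 'n) \<Rightarrow> real^'n" where
  "vec_inl z = (\<chi> a. z $ Inl a)"

definition vec_inr :: "real^('n + 'n) \<Rightarrow> real^'n" where
  "vec_inr z = (\<chi> a. z $ Inr a)"

lemma sum_UNIV_Plus:
  "(\<Sum>i\<in>UNIV. g i) = (\<Sum>a\<in>UNIV. g (Inl a)) + (\<Sum>b\<in>UNIV. g (Inr b))"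
  for g :: "'a::finite + 'b::finite \<Rightarrow> 'c::comm_monoid_add"
  using sum.Plus[of "UNIV :: 'a set" "UNIV :: 'b set" g] by (simp add: comp_def)

lemma norm_vec_Plus_squared: "(norm z)\<^sup>2 = (norm (vec_inl z))\<^sup>2 + (norm (vec_inr z))\<^sup>2"
  unfolding power2_norm_eq_inner inner_vec_def vec_inl_def vec_inr_def
  by (simp add: sum_UNIV_Plus)

lemma vec_inl_block2_mult_vec:
  "vec_inl (block2 M11 M12 M21 M22 *v z) = M11 *v vec_inl z + M12 *v vec_inr z"
  unfolding vec_inl_def vec_inr_def block2_def
  by (simp add: vec_eq_iff matrix_vector_mult_def sum_UNIV_Plus)

lemma vec_inr_block2_mult_vec:
  "vec_inr (block2 M11 M12 M21 M22 *v z) = M21 *v vec_inl z + M22 *v vec_inr z"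
  unfolding vec_inl_def vec_inr_def block2_def
  by (simp add: vec_eq_iff matrix_vector_mult_def sum_UNIV_Plus)

lemma block2_diff:
  "block2 A B C D - block2 A' B' C' D' = block2 (A - A') (B - B') (C - C') (D - D')"
  by (simp add: vec_eq_iff block2_def split: sum.split)

lemma norm_mult_vec_le_of_spec_norm_le: "spec_norm A \<le> c \<Longrightarrow> norm (A *v x) \<le> c * norm x"
  for A :: "real^'n^'m"
  by (meson mult_right_mono norm_ge_zero order_trans spec_norm_mult_vec_le)

lemma sum_squares_cross_le:
  fixes a b u v :: real
  assumes "0 \<le> a" "0 \<le> b"
  shows "(a * u + b * v)\<^sup>2 + (b * u + a * v)\<^sup>2 \<le> (a + b)\<^sup>2 * (u\<^sup>2 + v\<^sup>2)"
proof -
  have "(a + b)\<^sup>2 * (u\<^sup>2 + v\<^sup>2) - ((a * u + b * v)\<^sup>2 + (b * u + a * v)\<^sup>2) = 2 * (a * b) * (u - v)\<^sup>2"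
    by (simp add: power2_eq_square algebra_simps)
  also have "\<dots> \<ge> 0"
    using assms by simp
  finally show ?thesis
    by simp
qed

lemma spec_norm_block2_le:
  fixes M11 M12 M21 M22 :: "real^'n^'n"
  assumes diag: "spec_norm M11 \<le> a" "spec_norm M22 \<le> a"
    and off_diag: "spec_norm M12 \<le> b" "spec_norm M21 \<le> b"
  shows "spec_norm (block2 M11 M12 M21 M22) \<le> a + b"
proof (rule spec_norm_leI)
  fix z :: "real^('n + 'n)"
  let ?w = "block2 M11 M12 M21 M22 *v z" and ?u = "norm (vec_inl z)" and ?v = "norm (vec_inr z)"
  have "0 \<le> a" "0 \<le> b"
    using diag(1) off_diag(1) spec_norm_nonneg[of M11] spec_norm_nonneg[of M12] by linarith+
  have "norm (vec_inl ?w) \<le> a * ?u + b * ?v"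
    unfolding vec_inl_block2_mult_vec
    by (rule order_trans[OF norm_triangle_ineq add_mono])
      (intro norm_mult_vec_le_of_spec_norm_le diag off_diag)+
  moreover have "norm (vec_inr ?w) \<le> b * ?u + a * ?v"
    unfolding vec_inr_block2_mult_vec
    by (rule order_trans[OF norm_triangle_ineq add_mono])
      (intro norm_mult_vec_le_of_spec_norm_le diag off_diag)+
  ultimately have "(norm ?w)\<^sup>2 \<le> (a * ?u + b * ?v)\<^sup>2 + (b * ?u + a * ?v)\<^sup>2"
    unfolding norm_vec_Plus_squared[of ?w] by (intro add_mono power_mono) auto
  also have "\<dots> \<le> ((a + b) * norm z)\<^sup>2"
    using sum_squares_cross_le[OF \<open>0 \<le> a\<close> \<open>0 \<le> b\<close>]
    by (simp add: power_mult_distrib norm_vec_Plus_squared[of z])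
  finally show "norm ?w \<le> (a + b) * norm z"
    by (rule power2_le_imp_le) (simp add: \<open>0 \<le> a\<close> \<open>0 \<le> b\<close>)
qed

lemma matrix_mult_diff_rdistrib: "(A - B) ** C = A ** C - B ** C"
  for A B :: "real^'k^'m" and C :: "real^'n^'k"
  by (simp add: vec_eq_iff matrix_matrix_mult_def sum_subtractf algebra_simps)

lemma transpose_diff: "transpose (A - B) = transpose A - transpose B"
  for A B :: "real^'n^'m"
  by (simp add: vec_eq_iff transpose_def)

lemma spec_norm_add_transpose_le: "spec_norm (D + transpose D) \<le> 2 * spec_norm D"
  for D :: "real^'n^'n"
  using spec_norm_add_le[of D "transpose D"] spec_norm_transpose_le[of D] by linarith

lemma spec_norm_diff_transpose_le: "spec_norm (D - transpose D) \<le> 2 * spec_norm D"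
  for D :: "real^'n^'n"
  using spec_norm_diff_le[of D "transpose D"] spec_norm_transpose_le[of D] by linarith

lemma spec_lipschitz_on_mono:
  "spec_lipschitz_on K Xi F \<Longrightarrow> K \<le> L \<Longrightarrow> spec_lipschitz_on L Xi F"
  unfolding spec_lipschitz_on_def by (meson mult_right_mono norm_ge_zero order_trans)

lemma spec_lipschitz_on_dominated:
  assumes lip: "spec_lipschitz_on K Xi G" and "0 \<le> c"
    and dom: "\<And>\<xi>1 \<xi>2. \<xi>1 \<in> Xi \<Longrightarrow> \<xi>2 \<in> Xi \<Longrightarrow> spec_norm (F \<xi>1 - F \<xi>2) \<le> c * spec_norm (G \<xi>1 - G \<xi>2)"
  shows "spec_lipschitz_on (c * K) Xi F"
  unfolding spec_lipschitz_on_def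
proof (intro ballI)
  fix \<xi>1 \<xi>2 assume "\<xi>1 \<in> Xi" "\<xi>2 \<in> Xi"
  then have "spec_norm (F \<xi>1 - F \<xi>2) \<le> c * (K * norm (\<xi>1 - \<xi>2))"
    using dom lip \<open>0 \<le> c\<close> unfolding spec_lipschitz_on_def by (meson mult_left_mono order_trans)
  then show "spec_norm (F \<xi>1 - F \<xi>2) \<le> c * K * norm (\<xi>1 - \<xi>2)"
    by (simp add: mult.assoc)
qed

lemma spec_lipschitz_on_Xm:
  assumes lipA: "spec_lipschitz_on LA Xi At" and lipB: "spec_lipschitz_on LB Xi Bt"
  shows "spec_lipschitz_on (LA * spec_norm P + LB * spec_norm Y) Xi (Xm At Bt P Y)"
  unfolding spec_lipschitz_on_def
proof (intro ballI)
  fix \<xi>1 \<xi>2 assume "\<xi>1 \<in> Xi" "\<xi>2 \<in> Xi"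
  then have A: "spec_norm (At \<xi>1 - At \<xi>2) \<le> LA * norm (\<xi>1 - \<xi>2)"
    and B: "spec_norm (Bt \<xi>1 - Bt \<xi>2) \<le> LB * norm (\<xi>1 - \<xi>2)"
    using lipA lipB unfolding spec_lipschitz_on_def by blast+
  have "Xm At Bt P Y \<xi>1 - Xm At Bt P Y \<xi>2 = (At \<xi>1 - At \<xi>2) ** P - (Bt \<xi>1 - Bt \<xi>2) ** Y"
    by (simp add: Xm_def matrix_mult_diff_rdistrib)
  then have "spec_norm (Xm At Bt P Y \<xi>1 - Xm At Bt P Y \<xi>2)
      \<le> spec_norm ((At \<xi>1 - At \<xi>2) ** P) + spec_norm ((Bt \<xi>1 - Bt \<xi>2) ** Y)"
    by (simp add: spec_norm_diff_le)
  also have "\<dots> \<le> spec_norm (At \<xi>1 - At \<xi>2) * spec_norm P + spec_norm (Bt \<xi>1 - Bt \<xi>2) * spec_norm Y"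
    by (intro add_mono spec_norm_matrix_mult_le)
  also have "\<dots> \<le> LA * norm (\<xi>1 - \<xi>2) * spec_norm P + LB * norm (\<xi>1 - \<xi>2) * spec_norm Y"
    using A B by (intro add_mono mult_right_mono spec_norm_nonneg)
  finally show "spec_norm (Xm At Bt P Y \<xi>1 - Xm At Bt P Y \<xi>2)
      \<le> (LA * spec_norm P + LB * spec_norm Y) * norm (\<xi>1 - \<xi>2)"
    by (simp add: algebra_simps)
qed

lemma spec_norm_f1_diff_le:
  "spec_norm (f1 \<alpha> At Bt P Y \<gamma> \<xi>1 - f1 \<alpha> At Bt P Y \<gamma> \<xi>2)
    \<le> 2 * spec_norm (Xm At Bt P Y \<xi>1 - Xm At Bt P Y \<xi>2)"
proof -
  let ?D = "Xm At Bt P Y \<xi>1 - Xm At Bt P Y \<xi>2"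
  have "f1 \<alpha> At Bt P Y \<gamma> \<xi>1 - f1 \<alpha> At Bt P Y \<gamma> \<xi>2 = ?D + transpose ?D"
    by (simp add: f1_def Let_def transpose_diff)
  then show ?thesis
    using spec_norm_add_transpose_le by metis
qed

lemma spec_norm_f2_diff_le:
  "spec_norm (f2 r At Bt P Y \<gamma> \<xi>1 - f2 r At Bt P Y \<gamma> \<xi>2)
    \<le> spec_norm (Xm At Bt P Y \<xi>1 - Xm At Bt P Y \<xi>2)"
proof -
  let ?D = "Xm At Bt P Y \<xi>1 - Xm At Bt P Y \<xi>2"
  have "f2 r At Bt P Y \<gamma> \<xi>1 - f2 r At Bt P Y \<gamma> \<xi>2 = block2 0 ?D (transpose ?D) 0"
    by (simp add: f2_def Let_def block2_diff transpose_diff)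
  moreover have "spec_norm (block2 0 ?D (transpose ?D) 0) \<le> 0 + spec_norm ?D"
    by (intro spec_norm_block2_le spec_norm_transpose_le) simp_all
  ultimately show ?thesis
    by simp
qed

lemma spec_norm_f3_diff_le:
  "spec_norm (f3 \<theta> At Bt P Y \<gamma> \<xi>1 - f3 \<theta> At Bt P Y \<gamma> \<xi>2)
    \<le> 2 * (\<bar>sin \<theta>\<bar> + \<bar>cos \<theta>\<bar>) * spec_norm (Xm At Bt P Y \<xi>1 - Xm At Bt P Y \<xi>2)"
proof -
  let ?D = "Xm At Bt P Y \<xi>1 - Xm At Bt P Y \<xi>2"
  have "f3 \<theta> At Bt P Y \<gamma> \<xi>1 - f3 \<theta> At Bt P Y \<gamma> \<xi>2
      = block2 (sin \<theta> *\<^sub>R (?D + transpose ?D)) (cos \<theta> *\<^sub>R (?D - transpose ?D))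
               (- (cos \<theta> *\<^sub>R (?D - transpose ?D))) (sin \<theta> *\<^sub>R (?D + transpose ?D))"
    by (simp add: f3_def Let_def block2_diff transpose_diff algebra_simps)
  moreover have "spec_norm (block2 (sin \<theta> *\<^sub>R (?D + transpose ?D)) (cos \<theta> *\<^sub>R (?D - transpose ?D))
               (- (cos \<theta> *\<^sub>R (?D - transpose ?D))) (sin \<theta> *\<^sub>R (?D + transpose ?D)))
      \<le> \<bar>sin \<theta>\<bar> * (2 * spec_norm ?D) + \<bar>cos \<theta>\<bar> * (2 * spec_norm ?D)"
    by (intro spec_norm_block2_le)
      (simp_all add: mult_left_mono spec_norm_add_transpose_le spec_norm_diff_transpose_le)
  ultimately show ?thesis
    by (simp add: algebra_simps)
qed

lemma spec_lipschitz_on_constraint_maps: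
  fixes At :: "'a::real_normed_vector \<Rightarrow> real^'n^'n" and Bt :: "'a \<Rightarrow> real^'m^'n"
    and P :: "real^'n^'n" and Y :: "real^'n^'m" and LA LB \<mu> \<theta> :: real
  assumes LA: "0 \<le> LA" and LB: "0 \<le> LB"
    and lipA: "spec_lipschitz_on LA Xi At" and lipB: "spec_lipschitz_on LB Xi Bt"
    and P: "spec_norm P \<le> \<mu>" and Y: "spec_norm Y \<le> \<mu>"
  defines "L \<equiv> 2 * \<mu> * (LA + LB) * max 1 (\<bar>sin \<theta>\<bar> + \<bar>cos \<theta>\<bar>)"
  shows "spec_lipschitz_on L Xi (f1 \<alpha> At Bt P Y \<gamma>)"
    and "spec_lipschitz_on L Xi (f2 r At Bt P Y \<gamma>)"
    and "spec_lipschitz_on L Xi (f3 \<theta> At Bt P Y \<gamma>)"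
proof -
  define K where "K = \<mu> * (LA + LB)"
  have "0 \<le> K"
    using P spec_norm_nonneg[of P] LA LB by (simp add: K_def)
  have K_le: "c * K \<le> L" if "c \<le> 2 * max 1 (\<bar>sin \<theta>\<bar> + \<bar>cos \<theta>\<bar>)" for c
  proof -
    have "L = 2 * max 1 (\<bar>sin \<theta>\<bar> + \<bar>cos \<theta>\<bar>) * K"
      unfolding L_def K_def by (simp only: mult_ac)
    then show ?thesis
      using mult_right_mono[OF that \<open>0 \<le> K\<close>] by simp
  qed
  have "LA * spec_norm P + LB * spec_norm Y \<le> K"
    using P Y LA LB by (simp add: K_def distrib_left add_mono mult_left_mono mult.commute)
  then have lipX: "spec_lipschitz_on K Xi (Xm At Bt P Y)"
    using spec_lipschitz_on_Xm[OF lipA lipB] spec_lipschitz_on_mono by blast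
  show "spec_lipschitz_on L Xi (f1 \<alpha> At Bt P Y \<gamma>)"
    by (rule spec_lipschitz_on_mono[OF spec_lipschitz_on_dominated[OF lipX] K_le[of 2]])
      (rule spec_norm_f1_diff_le | simp add: max_def)+
  show "spec_lipschitz_on L Xi (f2 r At Bt P Y \<gamma>)"
    by (rule spec_lipschitz_on_mono[OF spec_lipschitz_on_dominated[OF lipX] K_le[of 1]])
      (rule spec_norm_f2_diff_le | simp add: max_def)+
  show "spec_lipschitz_on L Xi (f3 \<theta> At Bt P Y \<gamma>)"
    by (rule spec_lipschitz_on_mono[OF spec_lipschitz_on_dominated[OF lipX] K_le[of "2 * (\<bar>sin \<theta>\<bar> + \<bar>cos \<theta>\<bar>)"]])
      (rule spec_norm_f3_diff_le | simp add: max_def)+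
qed

theorem lemma1:
  fixes Xi :: "'a::real_normed_vector set"
    and At :: "'a \<Rightarrow> real^'n^'n" and Bt :: "'a \<Rightarrow> real^'m^'n"
    and LA LB \<alpha> r \<theta> \<mu> :: real
  assumes LA: "LA \<ge> 0" and LB: "LB \<ge> 0"
    and lipA: "spec_lipschitz_on LA Xi At"
    and lipB: "spec_lipschitz_on LB Xi Bt"
    and "\<alpha> > 0" and "r > 0" and "\<mu> > 0"
  shows "\<forall>P :: real^'n^'n. \<forall>Y :: real^'n^'m. \<forall>\<gamma> :: real.
           symmetric_mat P \<and> loewner_le 0 P \<and> loewner_le P (\<mu> *\<^sub>R mat 1) \<and> spec_norm Y \<le> \<mu> \<longrightarrow>
           (let L = 2 * \<mu> * (LA + LB) * max 1 (\<bar>sin \<theta>\<bar> + \<bar>cos \<theta>\<bar>) in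
             (\<forall>\<xi>1\<in>Xi. \<forall>\<xi>2\<in>Xi.
                spec_norm (f1 \<alpha> At Bt P Y \<gamma> \<xi>1 - f1 \<alpha> At Bt P Y \<gamma> \<xi>2) \<le> L * norm (\<xi>1 - \<xi>2) \<and>
                spec_norm (f2 r At Bt P Y \<gamma> \<xi>1 - f2 r At Bt P Y \<gamma> \<xi>2) \<le> L * norm (\<xi>1 - \<xi>2) \<and>
                spec_norm (f3 \<theta> At Bt P Y \<gamma> \<xi>1 - f3 \<theta> At Bt P Y \<gamma> \<xi>2) \<le> L * norm (\<xi>1 - \<xi>2)))"
proof (intro allI impI, goal_cases)
  case (1 P Y \<gamma>)
  then have "spec_norm P \<le> \<mu>" "spec_norm Y \<le> \<mu>"
    using spec_norm_le_of_loewner by blast+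
  from spec_lipschitz_on_constraint_maps[OF LA LB lipA lipB this]
  show ?case
    unfolding Let_def spec_lipschitz_on_def by blast
qed

end
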